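(* Let $\mathcal{T}=(\mathcal{V},\mathcal{E})$ obey the LC-PF model and covariance assumption of the context, with $\Omega_p(c,c)+\Omega_q(c,c)>0$ for every non-root node $c$. Suppose $\mathcal{T}$ has a set $\mathcal{M}$ of $k$ pairwise non-adjacent missing non-root nodes, each of degree exactly $2$ in $\mathcal{T}$. Let $\mathcal{O}=\mathcal{V}\setminus\mathcal{M}$, and let $\mathcal{T}_{\mathcal{M}}$ be the minimum weight spanning tree of the complete graph on $\mathcal{O}$ with edge weights $\phi_{ab}$. Then $\mathcal{T}_{\mathcal{M}}$ is a tree on $|\mathcal{V}|-k$ nodes that contains exactly $k$ edges not present in $\mathcal{T}$, and exactly $2k$ edges of $\mathcal{T}$ are not edges of $\mathcal{T}_{\mathcal{M}}$.
   Context: $\mathcal{T}=(\mathcal{V},\mathcal{E})$ is a tree with a distinguished root (substation) of degree one. Each edge $(ab)$ has resistance $r_{ab}>0$ and reactance $x_{ab}>0$. Let $H_{1/r},H_{1/x}$ be the weighted Laplacians with edge weights $1/r_{ab}$, $1/x_{ab}$, with the root row and column removed. Non-root nodes have random injections $p_a,q_a$. The LC-PF model gives $v=H_{1/r}^{-1}p+H_{1/x}^{-1}q$ and $\theta=H_{1/x}^{-1}p-H_{1/r}^{-1}q$ at non-root nodes; the root voltage is constant. Covariance assumption: $\Omega_p,\Omega_q$ are the covariances of $p,q$, and $\Omega_{pq}=\mathbb{E}[(p-\mathbb{E}p)(q-\mathbb{E}q)^T]=\Omega_{qp}^T$. For distinct non-root $a,b$, $\Omega_p(a,b)=\Omega_q(a,b)=\Omega_{qp}(a,b)=0$,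 and $\Omega_{qp}(a,a)\ge0$. Define $\phi_{ab}=\mathbb{E}[((v_a-\mathbb{E}v_a)-(v_b-\mathbb{E}v_b))^2]$. *)

theory Defs
  imports "HOL-Probability.Probability"
begin

definition ugraph :: "'v set \<Rightarrow> 'v set set \<Rightarrow> bool" where
  "ugraph V E \<longleftrightarrow> (\<forall>e\<in>E. \<exists>a b. e = {a, b} \<and> a \<noteq> b \<and> a \<in> V \<and> b \<in> V)"

definition gconnected :: "'v set \<Rightarrow> 'v set set \<Rightarrow> bool" where
  "gconnected V E \<longleftrightarrow> (\<forall>a\<in>V. \<forall>b\<in>V. (\<lambda>x y. {x, y} \<in> E)\<^sup>*\<^sup>* a b)"

definition is_tree :: "'v set \<Rightarrow> 'v set set \<Rightarrow> bool" where
  "is_tree V E \<longleftrightarrow> finite V \<and> V \<noteq> {} \<and> ugraph V E \<and> gconnected V E \<and> card E = card V - 1"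

definition degree :: "'v set set \<Rightarrow> 'v \<Rightarrow> nat" where
  "degree E a = card {b. b \<noteq> a \<and> {a, b} \<in> E}"

text \<open>Total weight of an edge set, for a symmetric pair weight w (each edge counted once).\<close>
definition tree_weight :: "'v set \<Rightarrow> 'v set set \<Rightarrow> ('v \<Rightarrow> 'v \<Rightarrow> real) \<Rightarrow> real" where
  "tree_weight Ob T w = (\<Sum>(a, b)\<in>{(a, b). a \<in> Ob \<and> b \<in> Ob \<and> a \<noteq> b \<and> {a, b} \<in> T}. w a b) / 2"

text \<open>Minimum weight spanning tree of the complete graph on Ob (every tree on Ob is a
  spanning tree of the complete graph on Ob).\<close>
definition is_MST :: "'v set \<Rightarrow> ('v \<Rightarrow> 'v \<Rightarrow> real) \<Rightarrow> 'v set set \<Rightarrow> bool" where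
  "is_MST Ob w T \<longleftrightarrow> is_tree Ob T \<and> (\<forall>T'. is_tree Ob T' \<longrightarrow> tree_weight Ob T w \<le> tree_weight Ob T' w)"

definition laplacian :: "'v set set \<Rightarrow> ('v set \<Rightarrow> real) \<Rightarrow> 'v \<Rightarrow> 'v \<Rightarrow> real" where
  "laplacian E g a b =
     (if a = b then (\<Sum>e\<in>{e\<in>E. a \<in> e}. g e)
      else if {a, b} \<in> E then - g {a, b} else 0)"

text \<open>Inverse of the matrix H restricted to rows/columns in N (i.e. the Laplacian with the
  rt row and column removed when N = V - {rt}).\<close>
definition red_inv :: "'v set \<Rightarrow> ('v \<Rightarrow> 'v \<Rightarrow> real) \<Rightarrow> 'v \<Rightarrow> 'v \<Rightarrow> real" where
  "red_inv N H = (THE A. (\<forall>a b. A a b \<noteq> 0 \<longrightarrow> a \<in> N \<and> b \<in> N) \<and>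
       (\<forall>a\<in>N. \<forall>b\<in>N. (\<Sum>c\<in>N. H a c * A c b) = (if a = b then 1 else 0)))"

definition lcpf_v :: "'v set \<Rightarrow> 'v set set \<Rightarrow> 'v \<Rightarrow> ('v set \<Rightarrow> real) \<Rightarrow> ('v set \<Rightarrow> real)
     \<Rightarrow> real \<Rightarrow> ('v \<Rightarrow> 'w \<Rightarrow> real) \<Rightarrow> ('v \<Rightarrow> 'w \<Rightarrow> real) \<Rightarrow> 'v \<Rightarrow> 'w \<Rightarrow> real" where
  "lcpf_v V E rt r x v0 p q a \<omega> =
     (if a = rt then v0
      else (\<Sum>b\<in>V - {rt}.
              red_inv (V - {rt}) (laplacian E (\<lambda>e. 1 / r e)) a b * p b \<omega>
            + red_inv (V - {rt}) (laplacian E (\<lambda>e. 1 / x e)) a b * q b \<omega>))"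

definition cov :: "'w measure \<Rightarrow> ('w \<Rightarrow> real) \<Rightarrow> ('w \<Rightarrow> real) \<Rightarrow> real" where
  "cov M X Y = (\<integral>\<omega>. (X \<omega> - (\<integral>z. X z \<partial>M)) * (Y \<omega> - (\<integral>z. Y z \<partial>M)) \<partial>M)"

definition phi :: "'w measure \<Rightarrow> ('v \<Rightarrow> 'w \<Rightarrow> real) \<Rightarrow> 'v \<Rightarrow> 'v \<Rightarrow> real" where
  "phi M v a b = (\<integral>\<omega>. ((v a \<omega> - (\<integral>z. v a z \<partial>M)) - (v b \<omega> - (\<integral>z. v b z \<partial>M)))\<^sup>2 \<partial>M)"

end

theory Submission
  imports Defs
begin

text \<open>Root the tree at s0 through a parent map. The reduced Laplacian inverse then has the
  closed form H_{1/rho}^{-1}(a, b) = total rho-weight of the edges shared by the root paths of a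
  and b, so with uncorrelated injections phi_ab is a sum over nodes d of nonnegative quadratic
  forms in the differences of these shared weights. Moving b towards u along the tree path from u
  to w only shrinks the shared edge sets involved, whence phi_ub < phi_uw: phi strictly increases
  along tree paths.

  Joining the unique child of every missing node to the missing node's parent gives a tree T_S on
  the observed nodes. An observed pair that is not an edge of T_S has an observed node strictly
  between them, so by induction every cut is crossed by a T_S edge strictly lighter than any
  non-T_S pair across it. By the exchange argument, T_S is the unique minimum spanning tree;
  it drops the 2k edges at the missing nodes and adds the k bypass edges.\<close>

section \<open>Rooted trees given by a parent map\<close>

lemma edge_rel_rtranclp_sym:
  assumes "(\<lambda>x y. {x, y} \<in> F)\<^sup>*\<^sup>* a b"
  shows "(\<lambda>x y. {x, y} \<in> F)\<^sup>*\<^sup>* b a"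
proof -
  have "symp (\<lambda>x y. {x, y} \<in> F)" by (rule sympI) (simp add: insert_commute)
  then show ?thesis using assms by (blast dest: sympD[OF symp_rtranclp])
qed

lemma ugraph_finite_edges:
  assumes "ugraph V E" and "finite V"
  shows "finite E"
proof -
  have "E \<subseteq> Pow V" using assms(1) unfolding ugraph_def by auto
  then show ?thesis using assms(2) by (meson finite_Pow_iff finite_subset)
qed

locale parent_tree =
  fixes V :: "'v set" and s0 :: 'v and par :: "'v \<Rightarrow> 'v" and dep :: "'v \<Rightarrow> nat"
  assumes finV: "finite V" and s0V: "s0 \<in> V"
    and par_in: "\<And>a. a \<in> V \<Longrightarrow> a \<noteq> s0 \<Longrightarrow> par a \<in> V"
    and dep_lt: "\<And>a. a \<in> V \<Longrightarrow> a \<noteq> s0 \<Longrightarrow> dep (par a) < dep a"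
begin

definition anc :: "'v \<Rightarrow> 'v \<Rightarrow> bool" where
  "anc x y \<longleftrightarrow> (\<lambda>a b. a \<in> V \<and> a \<noteq> s0 \<and> b = par a)\<^sup>*\<^sup>* y x"

definition edges :: "'v set set" where
  "edges = (\<lambda>a. {a, par a}) ` (V - {s0})"

lemma anc_refl [simp]: "anc x x"
  by (simp add: anc_def)

lemma anc_step: "y \<in> V \<Longrightarrow> y \<noteq> s0 \<Longrightarrow> anc x (par y) \<Longrightarrow> anc x y"
  unfolding anc_def by (rule converse_rtranclp_into_rtranclp) auto

lemma anc_cases: "anc x y \<Longrightarrow> x = y \<or> (y \<in> V \<and> y \<noteq> s0 \<and> anc x (par y))"
  unfolding anc_def by (erule converse_rtranclpE) auto

lemma anc_par_ne: "anc x y \<Longrightarrow> x \<noteq> y \<Longrightarrow> y \<in> V \<and> y \<noteq> s0 \<and> anc x (par y)"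
  using anc_cases by blast

lemma anc_par: "y \<in> V \<Longrightarrow> y \<noteq> s0 \<Longrightarrow> anc (par y) y"
  using anc_step anc_refl by blast

lemma anc_trans: "anc x y \<Longrightarrow> anc y z \<Longrightarrow> anc x z"
  unfolding anc_def by auto

lemma par_ne: "a \<in> V \<Longrightarrow> a \<noteq> s0 \<Longrightarrow> par a \<noteq> a"
  using dep_lt by fastforce

lemma anc_in: "anc x y \<Longrightarrow> y \<in> V \<Longrightarrow> x \<in> V"
  unfolding anc_def
proof (induction rule: converse_rtranclp_induct)
  case (step y z)
  then show ?case using par_in by auto
qed simp

lemma anc_dep_le: "anc x y \<Longrightarrow> dep x \<le> dep y"
  unfolding anc_def
proof (induction rule: converse_rtranclp_induct)
  case (step y z)
  then show ?case using dep_lt[of y] by auto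
qed simp

lemma par_anc_ne: "a \<in> V \<Longrightarrow> a \<noteq> s0 \<Longrightarrow> \<not> anc a (par a)"
  using anc_dep_le dep_lt by fastforce

lemma anc_antisym: "anc x y \<Longrightarrow> anc y x \<Longrightarrow> x = y"
  using anc_cases anc_dep_le dep_lt anc_in le_less_trans not_le by metis

lemma anc_s0: "y \<in> V \<Longrightarrow> anc s0 y"
proof (induction "dep y" arbitrary: y rule: less_induct)
  case less
  then show ?case using par_in dep_lt anc_step by (cases "y = s0") auto
qed

lemma anc_s0_eq: "anc x s0 \<Longrightarrow> x = s0"
  using anc_cases by blast

lemma anc_lin: "anc x y \<Longrightarrow> anc z y \<Longrightarrow> anc x z \<or> anc z x"
proof (induction "dep y" arbitrary: y rule: less_induct)
  case less
  show ?case
  proof (cases "x = y \<or> z = y")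
    case False
    then have "y \<in> V" "y \<noteq> s0" "anc x (par y)" "anc z (par y)"
      using anc_par_ne less.prems by blast+
    then show ?thesis using less dep_lt by blast
  qed (use less in auto)
qed

lemma anc_child: "anc c w \<Longrightarrow> w \<noteq> c \<Longrightarrow> \<exists>y. y \<in> V \<and> y \<noteq> s0 \<and> par y = c \<and> anc y w"
proof (induction "dep w" arbitrary: w rule: less_induct)
  case less
  then have w: "w \<in> V" "w \<noteq> s0" "anc c (par w)" using anc_par_ne by blast+
  show ?case
  proof (cases "par w = c")
    case False
    then obtain y where "y \<in> V \<and> y \<noteq> s0 \<and> par y = c \<and> anc y (par w)"
      using less w dep_lt by blast
    then show ?thesis using w anc_step by blast
  qed (use w in auto)
qed

lemma edges_par: "a \<in> V - {s0} \<Longrightarrow> {a, par a} \<in> edges"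
  unfolding edges_def by blast

lemma edge_inj: "inj_on (\<lambda>a. {a, par a}) (V - {s0})"
proof (rule inj_onI)
  fix a b assume a: "a \<in> V - {s0}" and b: "b \<in> V - {s0}" and e: "{a, par a} = {b, par b}"
  show "a = b"
  proof (rule ccontr)
    assume "a \<noteq> b"
    then have "a = par b" "b = par a" using e by (auto simp: doubleton_eq_iff)
    then show False using dep_lt[of a] dep_lt[of b] a b by auto
  qed
qed

lemma finite_edges: "finite edges"
  unfolding edges_def using finV by simp

lemma card_edges: "card edges = card V - 1"
  unfolding edges_def using card_image[OF edge_inj] finV s0V by (simp add: card_Diff_singleton)

lemma anc_reach:
  assumes "anc x y"
    and "\<And>a. anc x a \<Longrightarrow> anc a y \<Longrightarrow> a \<noteq> x \<Longrightarrow> {a, par a} \<in> F"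
  shows "(\<lambda>x y. {x, y} \<in> F)\<^sup>*\<^sup>* y x"
  using assms
proof (induction "dep y" arbitrary: y rule: less_induct)
  case less
  show ?case
  proof (cases "x = y")
    case False
    then have y: "y \<in> V" "y \<noteq> s0" "anc x (par y)" using anc_par_ne less.prems by blast+
    have "(\<lambda>x y. {x, y} \<in> F)\<^sup>*\<^sup>* (par y) x"
      using less(1)[of "par y"] dep_lt y less.prems(2) anc_step by blast
    moreover have "{y, par y} \<in> F" using less.prems False by simp
    ultimately show ?thesis by (meson converse_rtranclp_into_rtranclp)
  qed simp
qed

lemma is_tree_edges: "is_tree V edges"
proof -
  have "ugraph V edges" unfolding ugraph_def edges_def using par_in par_ne by blast
  moreover have to_s0: "(\<lambda>x y. {x, y} \<in> edges)\<^sup>*\<^sup>* y s0" if "y \<in> V" for y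
    by (rule anc_reach[OF anc_s0[OF that]]) (auto dest: anc_in[OF _ that] intro: edges_par)
  then have "gconnected V edges"
    unfolding gconnected_def by (blast intro: edge_rel_rtranclp_sym rtranclp_trans)
  ultimately show ?thesis unfolding is_tree_def using finV s0V card_edges by auto
qed

end

text \<open>The parent of a node is a neighbour strictly closer to s in breadth-first distance.\<close>
lemma is_tree_parent_tree:
  assumes T: "is_tree V E" and s: "s \<in> V"
  obtains par dep where "parent_tree V s par dep" and "E = parent_tree.edges V s par"
proof -
  define adj where "adj = (\<lambda>x y. {x, y} \<in> E)"
  have fin: "finite V" and ug: "ugraph V E" and gc: "gconnected V E" and cE: "card E = card V - 1"
    using T by (auto simp: is_tree_def)
  have reach: "\<exists>n. (adj ^^ n) s a" if "a \<in> V" for a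
    using gc s that unfolding gconnected_def adj_def by (meson rtranclp_power)
  define dist where "dist a = (LEAST n. (adj ^^ n) s a)" for a
  have dist: "(adj ^^ dist a) s a" if "a \<in> V" for a
    using reach[OF that] unfolding dist_def by (rule LeastI_ex)
  have adjV: "b \<in> V" if "adj b a" for a b
    using ug that unfolding ugraph_def adj_def by (metis doubleton_eq_iff)
  have closer: "\<exists>b. b \<in> V \<and> adj b a \<and> dist b < dist a" if a: "a \<in> V" "a \<noteq> s" for a
  proof -
    obtain n where n: "dist a = Suc n"
      using dist[OF a(1)] a(2) by (cases "dist a") auto
    then obtain b where b: "(adj ^^ n) s b" "adj b a"
      using dist[OF a(1)] by (auto simp del: relpowp.simps simp: relpowp_Suc_right)
    have "dist b \<le> n" unfolding dist_def using b(1) by (rule Least_le)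
    then show ?thesis using b adjV[OF b(2)] n by auto
  qed
  define par where "par a = (SOME b. b \<in> V \<and> adj b a \<and> dist b < dist a)" for a
  have par: "par a \<in> V \<and> adj (par a) a \<and> dist (par a) < dist a" if "a \<in> V" "a \<noteq> s" for a
    unfolding par_def using someI_ex[OF closer[OF that]] .
  interpret parent_tree V s par dist
    by unfold_locales (use fin s par in auto)
  have "edges \<subseteq> E"
    unfolding edges_def using par by (auto simp: adj_def insert_commute)
  then have "edges = E"
    using card_subset_eq[OF ugraph_finite_edges[OF ug fin]] card_edges cE by simp
  then show ?thesis using that parent_tree_axioms by blast
qed

section \<open>Exchanging an edge of a spanning tree\<close>

context parent_tree
begin

lemma edges_leaving_subtree:
  assumes e: "{y, z} \<in> edges" and y: "anc w y" and z: "\<not> anc w z"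
  shows "{y, z} = {w, par w}"
proof -
  obtain a where a: "a \<in> V - {s0}" "{y, z} = {a, par a}" using e unfolding edges_def by blast
  then consider "a = y" "par a = z" | "a = z" "par a = y" by (auto simp: doubleton_eq_iff)
  then show ?thesis
  proof cases
    case 1
    then have "w = y" using a y z anc_par_ne by metis
    then show ?thesis using 1 by simp
  next
    case 2
    then show ?thesis using a y z anc_step by blast
  qed
qed

lemma reconnect_subtree_is_tree:
  assumes w: "w \<in> V" "w \<noteq> s0" and yz: "y \<in> V" "z \<in> V" "anc w y" "\<not> anc w z"
  shows "is_tree V (insert {y, z} (edges - {{w, par w}}))" (is "is_tree V ?F")
proof -
  let ?R = "\<lambda>a b. {a, b} \<in> ?F"
  have in_F: "{c, par c} \<in> ?F" if "c \<in> V - {s0}" "c \<noteq> w" for c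
    using that edges_par inj_onD[OF edge_inj, of c w] w by auto
  have outside: "?R\<^sup>*\<^sup>* a s0" if "a \<in> V" "\<not> anc w a" for a
    by (rule anc_reach[OF anc_s0[OF that(1)]]) (use that anc_in in_F in blast)
  have inside: "?R\<^sup>*\<^sup>* a w" if "anc w a" for a
    by (rule anc_reach[OF that]) (use anc_par_ne in_F in blast)
  have to_s0: "?R\<^sup>*\<^sup>* a s0" if "a \<in> V" for a
  proof (cases "anc w a")
    case True
    have "?R\<^sup>*\<^sup>* a y"
      using inside[OF True] edge_rel_rtranclp_sym[OF inside[OF yz(3)]] by (rule rtranclp_trans)
    then have "?R\<^sup>*\<^sup>* a z" by (rule rtranclp.rtrancl_into_rtrancl) simp
    then show ?thesis using outside[OF yz(2,4)] by (rule rtranclp_trans)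
  qed (use outside that in blast)
  have "gconnected V ?F"
    unfolding gconnected_def by (blast intro: to_s0 edge_rel_rtranclp_sym rtranclp_trans)
  moreover have "ugraph V ?F"
    using is_tree_edges yz unfolding is_tree_def ugraph_def by auto
  moreover have "card ?F = card edges"
  proof -
    have "{y, z} \<notin> edges - {{w, par w}}" using edges_leaving_subtree yz(3,4) by blast
    moreover have "{w, par w} \<in> edges" using edges_par w by blast
    ultimately show ?thesis using finite_edges by (metis card_insert_disjoint card_Suc_Diff1 finite_Diff)
  qed
  ultimately show ?thesis using is_tree_edges unfolding is_tree_def by simp
qed

end

lemma is_tree_cut_edge:
  assumes T: "is_tree Ob T" and e: "{u, w} \<in> T"
  obtains X where "w \<in> X" "u \<notin> X"
    and "\<And>y z. {y, z} \<in> T \<Longrightarrow> y \<in> X \<Longrightarrow> z \<notin> X \<Longrightarrow> {y, z} = {u, w}"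
    and "\<And>y z. y \<in> Ob \<Longrightarrow> z \<in> Ob \<Longrightarrow> y \<in> X \<Longrightarrow> z \<notin> X \<Longrightarrow>
           is_tree Ob (insert {y, z} (T - {{u, w}}))"
proof -
  have uw: "u \<in> Ob" "w \<in> Ob" "u \<noteq> w"
    using T e unfolding is_tree_def ugraph_def by (metis doubleton_eq_iff)+
  obtain par dep where "parent_tree Ob u par dep" and T_eq: "T = parent_tree.edges Ob u par"
    using is_tree_parent_tree[OF T uw(1)] .
  then interpret parent_tree Ob u par dep by simp
  have par_w: "par w = u"
  proof -
    obtain a where "a \<in> Ob - {u}" "{u, w} = {a, par a}" using e unfolding T_eq edges_def by blast
    then show ?thesis by (auto simp: doubleton_eq_iff)
  qed
  show ?thesis
  proof (rule that[of "{y. anc w y}"])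
    show "u \<notin> {y. anc w y}" using anc_s0_eq uw(3) by blast
    show "{y, z} = {u, w}" if "{y, z} \<in> T" "y \<in> {y. anc w y}" "z \<notin> {y. anc w y}" for y z
      using edges_leaving_subtree that par_w unfolding T_eq by (auto simp: insert_commute)
    show "is_tree Ob (insert {y, z} (T - {{u, w}}))"
      if "y \<in> Ob" "z \<in> Ob" "y \<in> {y. anc w y}" "z \<notin> {y. anc w y}" for y z
      using reconnect_subtree_is_tree[of w y z] that uw par_w unfolding T_eq
      by (simp add: insert_commute)
  qed simp
qed

lemma tree_weight_insert:
  assumes fin: "finite Ob" and ab: "a \<in> Ob" "b \<in> Ob" "a \<noteq> b" and nin: "{a, b} \<notin> T"
  shows "tree_weight Ob (insert {a, b} T) f = tree_weight Ob T f + (f a b + f b a) / 2"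
proof -
  let ?P = "\<lambda>T. {(x, y). x \<in> Ob \<and> y \<in> Ob \<and> x \<noteq> y \<and> {x, y} \<in> T}"
  have eq: "?P (insert {a, b} T) = ?P T \<union> {(a, b), (b, a)}"
    using ab by (auto simp: doubleton_eq_iff insert_commute)
  have disj: "?P T \<inter> {(a, b), (b, a)} = {}" using nin by (auto simp: insert_commute)
  have finP: "finite (?P T)"
    by (rule finite_subset[of _ "Ob \<times> Ob"]) (use fin in auto)
  have "(\<Sum>(x, y)\<in>?P (insert {a, b} T). f x y) = (\<Sum>(x, y)\<in>?P T. f x y) + (f a b + f b a)"
    unfolding eq using finP disj ab by (simp add: sum.union_disjoint)
  then show ?thesis unfolding tree_weight_def by (simp add: add_divide_distrib)
qed

lemma MST_eq_of_cut_property: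
  assumes T: "is_tree Ob T" and MST: "is_MST Ob f TM"
    and f_sym: "\<And>a b. f a b = f b a"
    and cut: "\<And>u w X. u \<in> Ob \<Longrightarrow> w \<in> Ob \<Longrightarrow> u \<noteq> w \<Longrightarrow> {u, w} \<notin> T
                \<Longrightarrow> u \<in> X \<Longrightarrow> w \<notin> X \<Longrightarrow> \<exists>y z. {y, z} \<in> T \<and> y \<in> X \<and> z \<notin> X \<and> f y z < f u w"
  shows "TM = T"
proof (rule ccontr)
  assume "TM \<noteq> T"
  have TM: "is_tree Ob TM"
    and TM_min: "\<And>T'. is_tree Ob T' \<Longrightarrow> tree_weight Ob TM f \<le> tree_weight Ob T' f"
    using MST unfolding is_MST_def by blast+
  have finO: "finite Ob" and finTM: "finite TM" and finT: "finite T"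
    using T TM ugraph_finite_edges unfolding is_tree_def by blast+
  have "\<not> TM \<subseteq> T"
    using \<open>TM \<noteq> T\<close> card_subset_eq[OF finT] T TM unfolding is_tree_def by metis
  then obtain e where e: "e \<in> TM" "e \<notin> T" by blast
  then obtain u w where uw: "e = {u, w}" "u \<noteq> w" "u \<in> Ob" "w \<in> Ob"
    using TM unfolding is_tree_def ugraph_def by blast
  obtain X where X: "w \<in> X" "u \<notin> X"
    and crossing: "\<And>y z. {y, z} \<in> TM \<Longrightarrow> y \<in> X \<Longrightarrow> z \<notin> X \<Longrightarrow> {y, z} = {u, w}"
    and reconnect: "\<And>y z. y \<in> Ob \<Longrightarrow> z \<in> Ob \<Longrightarrow> y \<in> X \<Longrightarrow> z \<notin> X \<Longrightarrow>
                       is_tree Ob (insert {y, z} (TM - {{u, w}}))"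
    using is_tree_cut_edge[OF TM e(1)[unfolded uw(1)]] by blast
  obtain y z where yz: "{y, z} \<in> T" "y \<in> X" "z \<notin> X" "f y z < f w u"
    using cut[OF uw(4,3) uw(2)[symmetric] _ X] e uw(1) by (metis insert_commute)
  have yzO: "y \<in> Ob" "z \<in> Ob" "y \<noteq> z"
    using T yz(1) unfolding is_tree_def ugraph_def by (metis doubleton_eq_iff)+
  have "{y, z} \<notin> TM - {e}" using crossing yz(2,3) uw(1) by blast
  then have "tree_weight Ob (insert {y, z} (TM - {e})) f
             = tree_weight Ob (TM - {e}) f + (f y z + f z y) / 2"
    by (rule tree_weight_insert[OF finO yzO])
  also have "\<dots> < tree_weight Ob (TM - {e}) f + (f u w + f w u) / 2"
    using yz(4) f_sym[of z y] f_sym[of u w] by simp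
  also have "\<dots> = tree_weight Ob TM f"
    using tree_weight_insert[OF finO uw(3,4,2), of "TM - {e}"] e(1) uw(1) by (simp add: insert_absorb)
  finally show False using TM_min[OF reconnect[OF yzO(1,2) yz(2,3)]] uw(1) by simp
qed

section \<open>The reduced Laplacian inverse of a tree\<close>

lemma sum_of_bool_eq_mult:
  fixes f :: "'a \<Rightarrow> 'b::semiring_1"
  assumes "finite S"
  shows "(\<Sum>c\<in>S. of_bool (c = a) * f c) = (if a \<in> S then f a else 0)"
    and "(\<Sum>c\<in>S. of_bool (a = c) * f c) = (if a \<in> S then f a else 0)"
proof -
  have "(\<Sum>c\<in>S. of_bool (c = a) * f c) = (\<Sum>c\<in>S. if c = a then f c else 0)"
    and "(\<Sum>c\<in>S. of_bool (a = c) * f c) = (\<Sum>c\<in>S. if a = c then f c else 0)"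
    by (auto intro: sum.cong)
  then show "(\<Sum>c\<in>S. of_bool (c = a) * f c) = (if a \<in> S then f a else 0)"
    and "(\<Sum>c\<in>S. of_bool (a = c) * f c) = (if a \<in> S then f a else 0)"
    using assms by simp_all
qed

text \<open>Symmetry turns the right inverse A into a left inverse, which makes it the unique
  matrix in the definition of red_inv.\<close>
lemma red_inv_eqI:
  fixes H A :: "'v \<Rightarrow> 'v \<Rightarrow> real"
  assumes fin: "finite N"
    and H_sym: "\<And>a b. a \<in> N \<Longrightarrow> b \<in> N \<Longrightarrow> H a b = H b a"
    and A_sym: "\<And>a b. A a b = A b a"
    and A_supp: "\<And>a b. A a b \<noteq> 0 \<Longrightarrow> a \<in> N \<and> b \<in> N"
    and inv: "\<And>a b. a \<in> N \<Longrightarrow> b \<in> N \<Longrightarrow> (\<Sum>c\<in>N. H a c * A c b) = of_bool (a = b)"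
  shows "red_inv N H = A"
  unfolding red_inv_def of_bool_def[symmetric]
proof (rule the_equality)
  fix A' :: "'v \<Rightarrow> 'v \<Rightarrow> real"
  assume "(\<forall>a b. A' a b \<noteq> 0 \<longrightarrow> a \<in> N \<and> b \<in> N) \<and>
    (\<forall>a\<in>N. \<forall>b\<in>N. (\<Sum>c\<in>N. H a c * A' c b) = of_bool (a = b))"
  then have A'_supp: "\<And>a b. A' a b \<noteq> 0 \<Longrightarrow> a \<in> N \<and> b \<in> N"
    and inv': "\<And>a b. a \<in> N \<Longrightarrow> b \<in> N \<Longrightarrow> (\<Sum>c\<in>N. H a c * A' c b) = of_bool (a = b)"
    by blast+
  have left_inv: "(\<Sum>d\<in>N. A a d * H d c) = of_bool (a = c)" if "a \<in> N" "c \<in> N" for a c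
  proof -
    have "(\<Sum>d\<in>N. A a d * H d c) = (\<Sum>d\<in>N. H c d * A d a)"
      by (rule sum.cong) (use that H_sym A_sym in auto)
    then show ?thesis using inv[OF that(2,1)] by auto
  qed
  show "A' = A"
  proof (intro ext)
    fix a b
    show "A' a b = A a b"
    proof (cases "a \<in> N \<and> b \<in> N")
      case True
      have "A' a b = (\<Sum>c\<in>N. of_bool (a = c) * A' c b)"
        using True fin by (simp add: sum_of_bool_eq_mult)
      also have "\<dots> = (\<Sum>c\<in>N. (\<Sum>d\<in>N. A a d * H d c) * A' c b)"
        by (rule sum.cong) (use left_inv True in auto)
      also have "\<dots> = (\<Sum>d\<in>N. A a d * (\<Sum>c\<in>N. H d c * A' c b))"
        unfolding sum_distrib_left sum_distrib_right mult.assoc by (rule sum.swap)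
      also have "\<dots> = (\<Sum>d\<in>N. of_bool (d = b) * A a d)"
        by (rule sum.cong) (use inv' True in auto)
      also have "\<dots> = A a b" using True fin by (simp add: sum_of_bool_eq_mult)
      finally show ?thesis .
    next
      case False
      then have "A' a b = 0" "A a b = 0" using A'_supp[of a b] A_supp[of a b] by blast+
      then show ?thesis by simp
    qed
  qed
qed (use A_supp inv in blast)

context parent_tree
begin

text \<open>A non-root node c stands for the edge {c, par c}; shared_path a b collects the edges
  common to the root paths of a and b.\<close>
definition shared_path :: "'v \<Rightarrow> 'v \<Rightarrow> 'v set" where
  "shared_path a b = {c \<in> V - {s0}. anc c a \<and> anc c b}"

definition edge_sum :: "('v set \<Rightarrow> real) \<Rightarrow> 'v set \<Rightarrow> real" where
  "edge_sum \<rho> S = (\<Sum>c\<in>S. \<rho> {c, par c})"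

definition shared_sum :: "('v set \<Rightarrow> real) \<Rightarrow> 'v \<Rightarrow> 'v \<Rightarrow> real" where
  "shared_sum \<rho> a b = edge_sum \<rho> (shared_path a b)"

lemma finite_shared_path: "finite (shared_path a b)"
  unfolding shared_path_def using finV by simp

lemma shared_path_subset: "shared_path a b \<subseteq> V - {s0}"
  unfolding shared_path_def by blast

lemma shared_sum_sym: "shared_sum \<rho> a b = shared_sum \<rho> b a"
  unfolding shared_sum_def shared_path_def by (simp add: conj_commute)

lemma shared_sum_eq_0: "a \<notin> V - {s0} \<Longrightarrow> shared_sum \<rho> a b = 0"
proof -
  assume a: "a \<notin> V - {s0}"
  have "shared_path a b = {}"
    unfolding shared_path_def using a anc_cases anc_s0_eq by blast
  then show ?thesis unfolding shared_sum_def edge_sum_def by simp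
qed

lemma shared_sum_par:
  assumes x: "x \<in> V - {s0}"
  shows "shared_sum \<rho> x b = of_bool (anc x b) * \<rho> {x, par x} + shared_sum \<rho> (par x) b"
proof -
  have path: "shared_path x b = (if anc x b then insert x else id) (shared_path (par x) b)"
    unfolding shared_path_def using x anc_cases[of _ x] anc_step[of x] by auto
  have "x \<notin> shared_path (par x) b"
    unfolding shared_path_def using par_anc_ne x by auto
  then show ?thesis
    unfolding shared_sum_def edge_sum_def path using finite_shared_path by auto
qed

lemma sum_edges: "(\<Sum>e\<in>edges. f e) = (\<Sum>x\<in>V - {s0}. f {x, par x})"
  unfolding edges_def by (rule sum.reindex[OF edge_inj, unfolded comp_def])

lemma laplacian_edges_incidence:
  "laplacian edges g a c = (\<Sum>x\<in>V - {s0}.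
     g {x, par x} * (of_bool (a = x) - of_bool (a = par x)) * (of_bool (c = x) - of_bool (c = par x)))"
proof -
  have "laplacian edges g a c
      = (\<Sum>e\<in>edges. if a = c then (if a \<in> e then g e else 0) else if e = {a, c} then - g e else 0)"
    using finite_edges by (cases "a = c") (simp_all add: laplacian_def sum.inter_filter)
  also have "\<dots> = (\<Sum>x\<in>V - {s0}. if a = c then (if a \<in> {x, par x} then g {x, par x} else 0)
                    else if {x, par x} = {a, c} then - g {x, par x} else 0)"
    by (rule sum_edges)
  also have "\<dots> = (\<Sum>x\<in>V - {s0}.
     g {x, par x} * (of_bool (a = x) - of_bool (a = par x)) * (of_bool (c = x) - of_bool (c = par x)))"
  proof (rule sum.cong)
    fix x assume "x \<in> V - {s0}"
    then have "par x \<noteq> x" using par_ne by blast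
    then show "(if a = c then (if a \<in> {x, par x} then g {x, par x} else 0)
                else if {x, par x} = {a, c} then - g {x, par x} else 0)
      = g {x, par x} * (of_bool (a = x) - of_bool (a = par x)) * (of_bool (c = x) - of_bool (c = par x))"
      by (cases "a = c") (auto simp: of_bool_def doubleton_eq_iff)
  qed simp
  finally show ?thesis .
qed

lemma card_children_anc:
  "card {x \<in> V - {s0}. par x = a \<and> anc x b} = of_bool (anc a b \<and> a \<noteq> b)"
proof (cases "anc a b \<and> a \<noteq> b")
  case True
  then obtain y where y: "y \<in> V" "y \<noteq> s0" "par y = a" "anc y b" using anc_child by blast
  have "x = y" if x: "x \<in> V - {s0}" "par x = a" "anc x b" for x
  proof (rule ccontr)
    assume "x \<noteq> y"
    have "anc x y \<or> anc y x" using anc_lin x y by blast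
    then show False
    proof
      assume "anc x y"
      then have "anc x (par x)" using anc_par_ne \<open>x \<noteq> y\<close> x y by force
      then show False using par_anc_ne x by blast
    next
      assume "anc y x"
      then have "anc y (par y)" using anc_par_ne \<open>x \<noteq> y\<close> x y by force
      then show False using par_anc_ne y by blast
    qed
  qed
  then have children: "{x \<in> V - {s0}. par x = a \<and> anc x b} = {y}" using y by blast
  show ?thesis using True unfolding children by simp
next
  case False
  have no_children: "{x \<in> V - {s0}. par x = a \<and> anc x b} = {}"
    using False anc_trans anc_par par_anc_ne by blast
  show ?thesis using False unfolding no_children by simp
qed

lemma sum_incidence_anc:
  assumes a: "a \<in> V - {s0}"
  shows "(\<Sum>x\<in>V - {s0}. (of_bool (a = x) - of_bool (a = par x)) * of_bool (anc x b))
         = (of_bool (a = b) :: real)"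
proof -
  have "(\<Sum>x\<in>V - {s0}. of_bool (a = par x) * of_bool (anc x b))
      = (\<Sum>x\<in>V - {s0}. of_bool (par x = a \<and> anc x b) :: real)"
    by (rule sum.cong) auto
  also have "\<dots> = real (card ((V - {s0}) \<inter> {x. par x = a \<and> anc x b}))"
    using finV by simp
  also have "(V - {s0}) \<inter> {x. par x = a \<and> anc x b} = {x \<in> V - {s0}. par x = a \<and> anc x b}"
    by blast
  finally have children: "(\<Sum>x\<in>V - {s0}. of_bool (a = par x) * of_bool (anc x b))
      = (of_bool (anc a b \<and> a \<noteq> b) :: real)"
    unfolding card_children_anc by simp
  have self: "(\<Sum>x\<in>V - {s0}. of_bool (a = x) * of_bool (anc x b)) = (of_bool (anc a b) :: real)"
    using a finV by (simp only: sum_of_bool_eq_mult(2)[OF finite_Diff[OF finV]]) simp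
  have "(\<Sum>x\<in>V - {s0}. (of_bool (a = x) - of_bool (a = par x)) * of_bool (anc x b))
      = (\<Sum>x\<in>V - {s0}. of_bool (a = x) * of_bool (anc x b))
        - (\<Sum>x\<in>V - {s0}. of_bool (a = par x) * of_bool (anc x b) :: real)"
    by (simp add: left_diff_distrib sum_subtractf)
  also have "\<dots> = of_bool (anc a b) - of_bool (anc a b \<and> a \<noteq> b)"
    by (simp only: self children)
  also have "\<dots> = of_bool (a = b)"
    by (cases "a = b") simp_all
  finally show ?thesis .
qed

lemma red_inv_laplacian_edges:
  assumes pos: "\<And>c. c \<in> V - {s0} \<Longrightarrow> \<rho> {c, par c} > 0"
  shows "red_inv (V - {s0}) (laplacian edges (\<lambda>e. 1 / \<rho> e)) = shared_sum \<rho>"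
proof (rule red_inv_eqI)
  show "finite (V - {s0})" using finV by simp
  show "laplacian edges (\<lambda>e. 1 / \<rho> e) a b = laplacian edges (\<lambda>e. 1 / \<rho> e) b a" for a b
    by (simp add: laplacian_def insert_commute)
  show "shared_sum \<rho> a b = shared_sum \<rho> b a" for a b by (rule shared_sum_sym)
  show "shared_sum \<rho> a b \<noteq> 0 \<Longrightarrow> a \<in> V - {s0} \<and> b \<in> V - {s0}" for a b
    using shared_sum_eq_0 shared_sum_sym by metis
  fix a b assume a: "a \<in> V - {s0}" and b: "b \<in> V - {s0}"
  define g where "g = (\<lambda>e. 1 / \<rho> e)"
  let ?A = "shared_sum \<rho>"
  let ?inc = "\<lambda>c x. of_bool (c = x) - of_bool (c = par x) :: real"
  have "(\<Sum>c\<in>V - {s0}. laplacian edges g a c * ?A c b) = (\<Sum>c\<in>V. laplacian edges g a c * ?A c b)"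
    using finV s0V shared_sum_eq_0[of s0] by (simp add: sum.remove[of V s0])
  also have "\<dots> = (\<Sum>c\<in>V. \<Sum>x\<in>V - {s0}. g {x, par x} * ?inc a x * (?inc c x * ?A c b))"
    by (simp add: laplacian_edges_incidence sum_distrib_right mult.assoc)
  also have "\<dots> = (\<Sum>x\<in>V - {s0}. g {x, par x} * ?inc a x * (\<Sum>c\<in>V. ?inc c x * ?A c b))"
    by (subst sum.swap) (simp add: sum_distrib_left)
  also have "\<dots> = (\<Sum>x\<in>V - {s0}. g {x, par x} * ?inc a x * (?A x b - ?A (par x) b))"
  proof (rule sum.cong)
    fix x assume x: "x \<in> V - {s0}"
    have "(\<Sum>c\<in>V. ?inc c x * ?A c b)
        = (\<Sum>c\<in>V. of_bool (c = x) * ?A c b) - (\<Sum>c\<in>V. of_bool (c = par x) * ?A c b)"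
      by (simp add: left_diff_distrib sum_subtractf)
    also have "\<dots> = ?A x b - ?A (par x) b"
      using x par_in finV by (simp add: sum_of_bool_eq_mult)
    finally show "g {x, par x} * ?inc a x * (\<Sum>c\<in>V. ?inc c x * ?A c b)
        = g {x, par x} * ?inc a x * (?A x b - ?A (par x) b)" by simp
  qed simp
  also have "\<dots> = (\<Sum>x\<in>V - {s0}. ?inc a x * of_bool (anc x b))"
  proof (rule sum.cong)
    fix x assume x: "x \<in> V - {s0}"
    then have "\<rho> {x, par x} \<noteq> 0" using pos by force
    then show "g {x, par x} * ?inc a x * (?A x b - ?A (par x) b) = ?inc a x * of_bool (anc x b)"
      using shared_sum_par[OF x, of \<rho> b] by (simp add: g_def)
  qed simp
  also have "\<dots> = of_bool (a = b)"
    by (rule sum_incidence_anc[OF a])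
  finally show "(\<Sum>c\<in>V - {s0}. laplacian edges (\<lambda>e. 1 / \<rho> e) a c * ?A c b) = of_bool (a = b)"
    by (simp only: g_def)
qed

end

definition sq_integrable :: "'w measure \<Rightarrow> ('w \<Rightarrow> real) \<Rightarrow> bool" where
  "sq_integrable M f \<longleftrightarrow> f \<in> borel_measurable M \<and> integrable M (\<lambda>x. (f x)\<^sup>2)"

context finite_measure
begin

lemma sq_integrable_imp_integrable: "sq_integrable M f \<Longrightarrow> integrable M f"
  unfolding sq_integrable_def using square_integrable_imp_integrable by blast

lemma integrable_mult_sq_integrable:
  assumes "sq_integrable M f" and "sq_integrable M g"
  shows "integrable M (\<lambda>x. f x * g x)"
proof (rule Bochner_Integration.integrable_bound)
  show "integrable M (\<lambda>x. (f x)\<^sup>2 + (g x)\<^sup>2)"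
    using assms unfolding sq_integrable_def by simp
  show "(\<lambda>x. f x * g x) \<in> borel_measurable M"
    using assms unfolding sq_integrable_def by (auto intro: borel_measurable_times)
  have "\<bar>a * b\<bar> \<le> a\<^sup>2 + b\<^sup>2" for a b :: real
  proof -
    have "2 * (\<bar>a\<bar> * \<bar>b\<bar>) \<le> a\<^sup>2 + b\<^sup>2"
      using sum_squares_bound[of "\<bar>a\<bar>" "\<bar>b\<bar>"] by (simp add: mult.assoc)
    moreover have "0 \<le> \<bar>a\<bar> * \<bar>b\<bar>" by simp
    ultimately show ?thesis unfolding abs_mult by linarith
  qed
  then show "AE x in M. norm (f x * g x) \<le> norm ((f x)\<^sup>2 + (g x)\<^sup>2)"
    by simp
qed

lemma sq_integrable_add:
  assumes f: "sq_integrable M f" and g: "sq_integrable M g"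
  shows "sq_integrable M (\<lambda>x. f x + g x)"
proof -
  have "(\<lambda>x. (f x + g x)\<^sup>2) = (\<lambda>x. (f x)\<^sup>2 + 2 * (f x * g x) + (g x)\<^sup>2)"
    by (simp add: power2_eq_square algebra_simps)
  moreover have "integrable M (\<lambda>x. (f x)\<^sup>2 + 2 * (f x * g x) + (g x)\<^sup>2)"
    using f g integrable_mult_sq_integrable[OF f g] unfolding sq_integrable_def by simp
  ultimately show ?thesis using f g unfolding sq_integrable_def by (auto intro: borel_measurable_add)
qed

lemma sq_integrable_cmult: "sq_integrable M f \<Longrightarrow> sq_integrable M (\<lambda>x. c * f x)"
  unfolding sq_integrable_def by (auto simp: power_mult_distrib intro: borel_measurable_times)

lemma sq_integrable_diff_const: "sq_integrable M f \<Longrightarrow> sq_integrable M (\<lambda>x. f x - c)"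
  using sq_integrable_add[of f "\<lambda>x. - c"] unfolding sq_integrable_def by simp

lemma integral_square_sum:
  assumes "finite I" and "\<And>i. i \<in> I \<Longrightarrow> sq_integrable M (Y i)"
  shows "(\<integral>x. (\<Sum>i\<in>I. Y i x)\<^sup>2 \<partial>M) = (\<Sum>i\<in>I. \<Sum>j\<in>I. \<integral>x. Y i x * Y j x \<partial>M)"
proof -
  have "(\<lambda>x. (\<Sum>i\<in>I. Y i x)\<^sup>2) = (\<lambda>x. \<Sum>i\<in>I. \<Sum>j\<in>I. Y i x * Y j x)"
    by (simp add: power2_eq_square sum_product)
  moreover have "integrable M (\<lambda>x. Y i x * Y j x)" if "i \<in> I" "j \<in> I" for i j
    using integrable_mult_sq_integrable assms that by blast
  ultimately show ?thesis by (simp add: integral_sum)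
qed

lemma (in prob_space) affine_sub_integral:
  fixes p q :: "'i \<Rightarrow> 'a \<Rightarrow> real"
  assumes "\<And>d. d \<in> N \<Longrightarrow> integrable M (p d)" and "\<And>d. d \<in> N \<Longrightarrow> integrable M (q d)"
  shows "(c + (\<Sum>d\<in>N. R d * p d x + X d * q d x)) - (\<integral>z. c + (\<Sum>d\<in>N. R d * p d z + X d * q d z) \<partial>M)
       = (\<Sum>d\<in>N. R d * (p d x - (\<integral>z. p d z \<partial>M)) + X d * (q d x - (\<integral>z. q d z \<partial>M)))"
proof -
  have "(\<integral>z. c + (\<Sum>d\<in>N. R d * p d z + X d * q d z) \<partial>M)
      = c + (\<Sum>d\<in>N. R d * (\<integral>z. p d z \<partial>M) + X d * (\<integral>z. q d z \<partial>M))"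
    using assms prob_space by (simp add: integral_sum integral_add)
  then show ?thesis by (simp add: algebra_simps sum.distrib sum_subtractf)
qed

lemma cov_linear_combination:
  assumes "sq_integrable M f1" "sq_integrable M g1" "sq_integrable M f2" "sq_integrable M g2"
  shows "(\<integral>x. (a1 * (f1 x - (\<integral>z. f1 z \<partial>M)) + b1 * (g1 x - (\<integral>z. g1 z \<partial>M)))
              * (a2 * (f2 x - (\<integral>z. f2 z \<partial>M)) + b2 * (g2 x - (\<integral>z. g2 z \<partial>M))) \<partial>M)
       = a1 * a2 * cov M f1 f2 + a1 * b2 * cov M g2 f1 + b1 * a2 * cov M g1 f2 + b1 * b2 * cov M g1 g2"
proof -
  let ?c = "\<lambda>f x. f x - (\<integral>z. f z \<partial>M)"
  have prod: "integrable M (\<lambda>x. ?c f x * ?c g x)" if "sq_integrable M f" "sq_integrable M g" for f g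
    using integrable_mult_sq_integrable sq_integrable_diff_const that by blast
  have "(\<lambda>x. (a1 * ?c f1 x + b1 * ?c g1 x) * (a2 * ?c f2 x + b2 * ?c g2 x))
      = (\<lambda>x. a1 * a2 * (?c f1 x * ?c f2 x) + a1 * b2 * (?c g2 x * ?c f1 x)
             + b1 * a2 * (?c g1 x * ?c f2 x) + b1 * b2 * (?c g1 x * ?c g2 x))"
    by (simp add: algebra_simps)
  then show ?thesis using prod assms unfolding cov_def by simp
qed

end

definition quad_form :: "real \<Rightarrow> real \<Rightarrow> real \<Rightarrow> real \<Rightarrow> real \<Rightarrow> real" where
  "quad_form A B C s t = s\<^sup>2 * A + 2 * s * t * C + t\<^sup>2 * B"

lemma quad_form_scale: "quad_form A B C (c * s) (c * t) = c\<^sup>2 * quad_form A B C s t"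
  unfolding quad_form_def by (simp add: power2_eq_square algebra_simps)

lemma quad_form_mono:
  assumes "0 \<le> A" "0 \<le> B" "0 \<le> C" "0 \<le> s1" "s1 \<le> s2" "0 \<le> t1" "t1 \<le> t2"
  shows "quad_form A B C s1 t1 \<le> quad_form A B C s2 t2"
proof -
  have "s1\<^sup>2 * A \<le> s2\<^sup>2 * A" "t1\<^sup>2 * B \<le> t2\<^sup>2 * B" "(s1 * t1) * C \<le> (s2 * t2) * C"
    using assms by (auto intro!: mult_right_mono power_mono mult_mono)
  then show ?thesis unfolding quad_form_def by (simp add: mult.assoc)
qed

lemma quad_form_strict_mono:
  assumes "0 \<le> A" "0 \<le> B" "0 \<le> C" "0 < A + B" "0 \<le> s1" "s1 < s2" "0 \<le> t1" "t1 < t2"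
  shows "quad_form A B C s1 t1 < quad_form A B C s2 t2"
proof -
  have sq: "s1\<^sup>2 < s2\<^sup>2" "t1\<^sup>2 < t2\<^sup>2" using assms by (auto intro: power_strict_mono)
  have "s1\<^sup>2 * A \<le> s2\<^sup>2 * A" "t1\<^sup>2 * B \<le> t2\<^sup>2 * B" "(s1 * t1) * C \<le> (s2 * t2) * C"
    using assms sq by (auto intro!: mult_right_mono mult_mono)
  moreover have "s1\<^sup>2 * A < s2\<^sup>2 * A \<or> t1\<^sup>2 * B < t2\<^sup>2 * B"
    using assms sq by (cases "0 < A") auto
  ultimately show ?thesis unfolding quad_form_def by (auto simp: mult.assoc)
qed

text \<open>The cross terms between distinct nodes vanish by the covariance assumptions.\<close>
lemma phi_affine_eq:
  fixes p q :: "'v \<Rightarrow> 'w \<Rightarrow> real" and v :: "'v \<Rightarrow> 'w \<Rightarrow> real"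
  assumes prob: "prob_space M" and finN: "finite N"
    and p_L2: "\<And>d. d \<in> N \<Longrightarrow> sq_integrable M (p d)"
    and q_L2: "\<And>d. d \<in> N \<Longrightarrow> sq_integrable M (q d)"
    and cov_p: "\<forall>a\<in>N. \<forall>b\<in>N. a \<noteq> b \<longrightarrow> cov M (p a) (p b) = 0"
    and cov_q: "\<forall>a\<in>N. \<forall>b\<in>N. a \<noteq> b \<longrightarrow> cov M (q a) (q b) = 0"
    and cov_qp: "\<forall>a\<in>N. \<forall>b\<in>N. a \<noteq> b \<longrightarrow> cov M (q a) (p b) = 0"
    and vu: "v u = (\<lambda>x. cu + (\<Sum>d\<in>N. R u d * p d x + X u d * q d x))"
    and vw: "v w = (\<lambda>x. cw + (\<Sum>d\<in>N. R w d * p d x + X w d * q d x))"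
  shows "phi M v u w = (\<Sum>d\<in>N. quad_form (cov M (p d) (p d)) (cov M (q d) (q d)) (cov M (q d) (p d))
                                  (R u d - R w d) (X u d - X w d))"
proof -
  interpret prob_space M by (rule prob)
  let ?F = "\<lambda>d. quad_form (cov M (p d) (p d)) (cov M (q d) (q d)) (cov M (q d) (p d))
                              (R u d - R w d) (X u d - X w d)"
  define P where "P d x = p d x - (\<integral>z. p d z \<partial>M)" for d x
  define Q where "Q d x = q d x - (\<integral>z. q d z \<partial>M)" for d x
  have P_L2: "sq_integrable M (P d)" and Q_L2: "sq_integrable M (Q d)" if "d \<in> N" for d
    unfolding P_def Q_def using sq_integrable_diff_const p_L2 q_L2 that by blast+
  have centered: "v a x - (\<integral>z. v a z \<partial>M) = (\<Sum>d\<in>N. R a d * P d x + X a d * Q d x)"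
    if "v a = (\<lambda>x. c + (\<Sum>d\<in>N. R a d * p d x + X a d * q d x))" for a c x
    unfolding that P_def Q_def
    by (rule affine_sub_integral) (use sq_integrable_imp_integrable p_L2 q_L2 in blast)+
  define Y where "Y d x = (R u d - R w d) * P d x + (X u d - X w d) * Q d x" for d x
  have Y_L2: "sq_integrable M (Y d)" if "d \<in> N" for d
    unfolding Y_def using sq_integrable_add sq_integrable_cmult P_L2 Q_L2 that by blast
  have "phi M v u w = (\<integral>x. (\<Sum>d\<in>N. Y d x)\<^sup>2 \<partial>M)"
    unfolding phi_def centered[OF vu] centered[OF vw] Y_def sum_subtractf[symmetric]
    by (simp add: algebra_simps)
  also have "\<dots> = (\<Sum>d\<in>N. \<Sum>e\<in>N. \<integral>x. Y d x * Y e x \<partial>M)"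
    using integral_square_sum[OF finN Y_L2] by simp
  also have "\<dots> = (\<Sum>d\<in>N. ?F d)"
  proof (rule sum.cong)
    fix d assume d: "d \<in> N"
    have "(\<integral>x. Y d x * Y e x \<partial>M) = of_bool (e = d) * ?F d" if e: "e \<in> N" for e
    proof -
      have "(\<integral>x. Y d x * Y e x \<partial>M) =
          (R u d - R w d) * (R u e - R w e) * cov M (p d) (p e)
        + (R u d - R w d) * (X u e - X w e) * cov M (q e) (p d)
        + (X u d - X w d) * (R u e - R w e) * cov M (q d) (p e)
        + (X u d - X w d) * (X u e - X w e) * cov M (q d) (q e)"
        unfolding Y_def P_def Q_def by (rule cov_linear_combination) (use p_L2 q_L2 d e in auto)
      then show ?thesis
        using cov_p cov_q cov_qp d e by (auto simp: quad_form_def power2_eq_square algebra_simps)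
    qed
    then show "(\<Sum>e\<in>N. \<integral>x. Y d x * Y e x \<partial>M) = ?F d"
      using finN d by (simp add: sum_of_bool_eq_mult)
  qed simp
  finally show ?thesis .
qed

lemma phi_sym: "phi M v a b = phi M v b a"
  unfolding phi_def by (simp add: power2_commute)

section \<open>Monotonicity of phi along tree paths\<close>

context parent_tree
begin

text \<open>b lies on the tree path between u and w.\<close>
definition between :: "'v \<Rightarrow> 'v \<Rightarrow> 'v \<Rightarrow> bool" where
  "between u b w \<longleftrightarrow> (anc b u \<or> anc b w) \<and> (\<forall>z. anc z u \<and> anc z w \<longrightarrow> anc z b)"

lemma between_refl: "between u u w"
  unfolding between_def by simp

lemma between_sym: "between u b w \<longleftrightarrow> between w b u"
  unfolding between_def by blast

lemma between_trans: "between u b w \<Longrightarrow> between u c b \<Longrightarrow> between u c w"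
  unfolding between_def using anc_trans by blast

lemma between_antisym: "between u b w \<Longrightarrow> between b u w \<Longrightarrow> u = b"
  unfolding between_def using anc_antisym anc_refl by metis

lemma between_par:
  assumes "anc x u" "\<not> anc x w" "w \<in> V" "u \<in> V"
  shows "x \<in> V - {s0} \<and> between u (par x) w"
proof -
  have x: "x \<in> V" "x \<noteq> s0" using assms anc_s0 anc_in by blast+
  have "anc (par x) u" using assms anc_trans anc_par x by blast
  moreover have "anc z (par x)" if "anc z u" "anc z w" for z
  proof -
    have "anc z x" using anc_lin that assms anc_trans by blast
    moreover have "z \<noteq> x" using assms that by blast
    ultimately show ?thesis using anc_par_ne by blast
  qed
  ultimately show ?thesis unfolding between_def using x by blast
qed

lemma card_between_less:
  assumes "between u b w" "b \<noteq> u" "b \<noteq> w" "u \<in> V" "w \<in> V"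
  shows "card {c\<in>V. between b c w} < card {c\<in>V. between u c w}"
    and "card {c\<in>V. between u c b} < card {c\<in>V. between u c w}"
proof -
  have fin: "finite {c\<in>V. between u c w}" using finV by simp
  have "{c\<in>V. between b c w} \<subseteq> {c\<in>V. between u c w} - {u}"
  proof
    fix c assume c: "c \<in> {c\<in>V. between b c w}"
    then have "between w c u" using between_trans[of w b u c] assms between_sym by blast
    moreover have "c \<noteq> u" using c between_antisym assms by blast
    ultimately show "c \<in> {c\<in>V. between u c w} - {u}" using c between_sym by blast
  qed
  then have "{c\<in>V. between b c w} \<subset> {c\<in>V. between u c w}"
    using between_refl assms by blast
  then show "card {c\<in>V. between b c w} < card {c\<in>V. between u c w}"
    using fin by (rule psubset_card_mono[rotated])
  have "{c\<in>V. between u c b} \<subseteq> {c\<in>V. between u c w} - {w}"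
  proof
    fix c assume c: "c \<in> {c\<in>V. between u c b}"
    then have "between u c w" using between_trans assms by blast
    moreover have "c \<noteq> w"
    proof
      assume "c = w"
      then have "between b w u" "between w b u" using c assms between_sym by auto
      then show False using between_antisym assms by blast
    qed
    ultimately show "c \<in> {c\<in>V. between u c w} - {w}" using c by blast
  qed
  then have "{c\<in>V. between u c b} \<subset> {c\<in>V. between u c w}"
    using between_refl between_sym assms by blast
  then show "card {c\<in>V. between u c b} < card {c\<in>V. between u c w}"
    using fin by (rule psubset_card_mono[rotated])
qed

lemma shared_path_nested: "shared_path a d \<subseteq> shared_path b d \<or> shared_path b d \<subseteq> shared_path a d"
  unfolding shared_path_def using anc_lin anc_trans by blast

lemma shared_path_between:
  "between u b w \<Longrightarrow> shared_path u d \<inter> shared_path w d \<subseteq> shared_path b d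
     \<and> shared_path b d \<subseteq> shared_path u d \<union> shared_path w d"
  unfolding between_def shared_path_def using anc_trans by blast

lemma edge_sum_diff: "finite T \<Longrightarrow> S \<subseteq> T \<Longrightarrow> edge_sum \<rho> T - edge_sum \<rho> S = edge_sum \<rho> (T - S)"
  unfolding edge_sum_def by (simp add: sum_diff)

lemma edge_sum_nonneg:
  "(\<And>c. c \<in> V - {s0} \<Longrightarrow> \<rho> {c, par c} > 0) \<Longrightarrow> S \<subseteq> V - {s0} \<Longrightarrow> 0 \<le> edge_sum \<rho> S"
  unfolding edge_sum_def by (rule sum_nonneg) (meson less_imp_le subsetD)

lemma edge_sum_mono:
  assumes "\<And>c. c \<in> V - {s0} \<Longrightarrow> \<rho> {c, par c} > 0" and "S \<subseteq> T" "T \<subseteq> V - {s0}"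
  shows "edge_sum \<rho> S \<le> edge_sum \<rho> T"
  unfolding edge_sum_def
  by (rule sum_mono2) (use assms finV in \<open>auto intro: finite_subset less_imp_le\<close>)

lemma edge_sum_strict_mono:
  assumes pos: "\<And>c. c \<in> V - {s0} \<Longrightarrow> \<rho> {c, par c} > 0" and "S \<subset> T" "T \<subseteq> V - {s0}"
  shows "edge_sum \<rho> S < edge_sum \<rho> T"
proof -
  have fin: "finite T" using assms finV finite_subset by blast
  have "0 < edge_sum \<rho> (T - S)"
    unfolding edge_sum_def using assms fin by (intro sum_pos) auto
  then show ?thesis using edge_sum_diff[OF fin, of S \<rho>] assms by auto
qed

lemma quad_form_edge_sum_mono:
  assumes r_pos: "\<And>c. c \<in> V - {s0} \<Longrightarrow> r {c, par c} > 0"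
    and x_pos: "\<And>c. c \<in> V - {s0} \<Longrightarrow> x {c, par c} > 0"
    and ABC: "0 \<le> A" "0 \<le> B" "0 \<le> C" and ST: "S \<subseteq> T" "T \<subseteq> V - {s0}"
  shows "quad_form A B C (edge_sum r S) (edge_sum x S) \<le> quad_form A B C (edge_sum r T) (edge_sum x T)"
    and "S \<noteq> T \<Longrightarrow> 0 < A + B \<Longrightarrow>
         quad_form A B C (edge_sum r S) (edge_sum x S) < quad_form A B C (edge_sum r T) (edge_sum x T)"
proof -
  have S: "S \<subseteq> V - {s0}" using ST by blast
  show "quad_form A B C (edge_sum r S) (edge_sum x S) \<le> quad_form A B C (edge_sum r T) (edge_sum x T)"
    by (rule quad_form_mono[OF ABC
          edge_sum_nonneg[where \<rho>=r, OF r_pos S] edge_sum_mono[where \<rho>=r, OF r_pos ST]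
          edge_sum_nonneg[where \<rho>=x, OF x_pos S] edge_sum_mono[where \<rho>=x, OF x_pos ST]])
  show "quad_form A B C (edge_sum r S) (edge_sum x S) < quad_form A B C (edge_sum r T) (edge_sum x T)"
    if "S \<noteq> T" "0 < A + B"
  proof -
    have ST': "S \<subset> T" using ST that by blast
    show ?thesis
      by (rule quad_form_strict_mono[OF ABC that(2)
            edge_sum_nonneg[where \<rho>=r, OF r_pos S] edge_sum_strict_mono[where \<rho>=r, OF r_pos ST' ST(2)]
            edge_sum_nonneg[where \<rho>=x, OF x_pos S] edge_sum_strict_mono[where \<rho>=x, OF x_pos ST' ST(2)]])
  qed
qed

text \<open>Since the shared paths are nested, moving the second argument from w to a node b between
  u and w shrinks the (signed) edge set measured by the difference.\<close>
lemma shared_sum_between_diff: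
  assumes "between u b w"
  obtains S T and \<sigma> :: real where "S \<subseteq> T" "T \<subseteq> V - {s0}" "\<sigma>\<^sup>2 = 1"
    and "shared_path b d \<noteq> shared_path w d \<Longrightarrow> S \<noteq> T"
    and "\<And>\<rho>. shared_sum \<rho> u d - shared_sum \<rho> b d = \<sigma> * edge_sum \<rho> S"
    and "\<And>\<rho>. shared_sum \<rho> u d - shared_sum \<rho> w d = \<sigma> * edge_sum \<rho> T"
proof -
  let ?u = "shared_path u d" and ?b = "shared_path b d" and ?w = "shared_path w d"
  have between_paths: "?u \<inter> ?w \<subseteq> ?b" "?b \<subseteq> ?u \<union> ?w" using shared_path_between[OF assms] by auto
  have sub: "?u \<subseteq> V - {s0}" "?w \<subseteq> V - {s0}" by (simp_all add: shared_path_subset)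
  consider "?u \<subseteq> ?w" | "?w \<subseteq> ?u" using shared_path_nested by blast
  then show ?thesis
  proof cases
    case 1
    then have "?u \<subseteq> ?b" "?b \<subseteq> ?w" using between_paths by auto
    show ?thesis
    proof (rule that[of "?b - ?u" "?w - ?u" "- 1"])
      show "shared_sum \<rho> u d - shared_sum \<rho> b d = - 1 * edge_sum \<rho> (?b - ?u)" for \<rho>
        using edge_sum_diff[OF finite_shared_path \<open>?u \<subseteq> ?b\<close>, where \<rho>=\<rho>] unfolding shared_sum_def by linarith
      show "shared_sum \<rho> u d - shared_sum \<rho> w d = - 1 * edge_sum \<rho> (?w - ?u)" for \<rho>
        using edge_sum_diff[OF finite_shared_path \<open>?u \<subseteq> ?w\<close>, where \<rho>=\<rho>] unfolding shared_sum_def by linarith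
    qed (use \<open>?u \<subseteq> ?b\<close> \<open>?b \<subseteq> ?w\<close> sub in auto)
  next
    case 2
    then have "?w \<subseteq> ?b" "?b \<subseteq> ?u" using between_paths by auto
    show ?thesis
    proof (rule that[of "?u - ?b" "?u - ?w" 1])
      show "shared_sum \<rho> u d - shared_sum \<rho> b d = 1 * edge_sum \<rho> (?u - ?b)" for \<rho>
        using edge_sum_diff[OF finite_shared_path \<open>?b \<subseteq> ?u\<close>, where \<rho>=\<rho>] unfolding shared_sum_def by linarith
      show "shared_sum \<rho> u d - shared_sum \<rho> w d = 1 * edge_sum \<rho> (?u - ?w)" for \<rho>
        using edge_sum_diff[OF finite_shared_path \<open>?w \<subseteq> ?u\<close>, where \<rho>=\<rho>] unfolding shared_sum_def by linarith
    qed (use \<open>?w \<subseteq> ?b\<close> \<open>?b \<subseteq> ?u\<close> sub in auto)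
  qed
qed

lemma quad_form_shared_sum_mono:
  assumes r_pos: "\<And>c. c \<in> V - {s0} \<Longrightarrow> r {c, par c} > 0"
    and x_pos: "\<And>c. c \<in> V - {s0} \<Longrightarrow> x {c, par c} > 0"
    and ABC: "0 \<le> A" "0 \<le> B" "0 \<le> C" and bt: "between u b w"
  shows "quad_form A B C (shared_sum r u d - shared_sum r b d) (shared_sum x u d - shared_sum x b d)
       \<le> quad_form A B C (shared_sum r u d - shared_sum r w d) (shared_sum x u d - shared_sum x w d)"
    and "shared_path b d \<noteq> shared_path w d \<Longrightarrow> 0 < A + B \<Longrightarrow>
         quad_form A B C (shared_sum r u d - shared_sum r b d) (shared_sum x u d - shared_sum x b d)
       < quad_form A B C (shared_sum r u d - shared_sum r w d) (shared_sum x u d - shared_sum x w d)"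
proof -
  obtain S T and \<sigma> :: real where ST: "S \<subseteq> T" "T \<subseteq> V - {s0}" and \<sigma>: "\<sigma>\<^sup>2 = 1"
    and ne: "shared_path b d \<noteq> shared_path w d \<Longrightarrow> S \<noteq> T"
    and diff_b: "\<And>\<rho>. shared_sum \<rho> u d - shared_sum \<rho> b d = \<sigma> * edge_sum \<rho> S"
    and diff_w: "\<And>\<rho>. shared_sum \<rho> u d - shared_sum \<rho> w d = \<sigma> * edge_sum \<rho> T"
    using shared_sum_between_diff[OF bt] by blast
  have le: "quad_form A B C (edge_sum r S) (edge_sum x S) \<le> quad_form A B C (edge_sum r T) (edge_sum x T)"
    by (rule quad_form_edge_sum_mono(1)) (fact r_pos x_pos ABC ST)+
  show "quad_form A B C (shared_sum r u d - shared_sum r b d) (shared_sum x u d - shared_sum x b d)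
       \<le> quad_form A B C (shared_sum r u d - shared_sum r w d) (shared_sum x u d - shared_sum x w d)"
    unfolding diff_b diff_w quad_form_scale \<sigma> using le by simp
  show "quad_form A B C (shared_sum r u d - shared_sum r b d) (shared_sum x u d - shared_sum x b d)
       < quad_form A B C (shared_sum r u d - shared_sum r w d) (shared_sum x u d - shared_sum x w d)"
    if "shared_path b d \<noteq> shared_path w d" "0 < A + B"
  proof -
    have "quad_form A B C (edge_sum r S) (edge_sum x S) < quad_form A B C (edge_sum r T) (edge_sum x T)"
      by (rule quad_form_edge_sum_mono(2)) (fact r_pos x_pos ABC ST ne[OF that(1)] that(2))+
    then show ?thesis unfolding diff_b diff_w quad_form_scale \<sigma> by simp
  qed
qed

lemma sum_quad_form_between_less:
  assumes r_pos: "\<And>c. c \<in> V - {s0} \<Longrightarrow> r {c, par c} > 0"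
    and x_pos: "\<And>c. c \<in> V - {s0} \<Longrightarrow> x {c, par c} > 0"
    and ABC: "\<And>d. d \<in> V - {s0} \<Longrightarrow> 0 \<le> A d \<and> 0 \<le> B d \<and> 0 \<le> C d \<and> 0 < A d + B d"
    and bt: "between u b w" and bw: "b \<noteq> w" and V: "b \<in> V" "w \<in> V"
  shows "(\<Sum>d\<in>V - {s0}. quad_form (A d) (B d) (C d)
            (shared_sum r u d - shared_sum r b d) (shared_sum x u d - shared_sum x b d))
       < (\<Sum>d\<in>V - {s0}. quad_form (A d) (B d) (C d)
            (shared_sum r u d - shared_sum r w d) (shared_sum x u d - shared_sum x w d))"
  (is "(\<Sum>d\<in>_. ?Fb d) < (\<Sum>d\<in>_. ?Fw d)")
proof (rule sum_strict_mono_ex1)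
  show "finite (V - {s0})" using finV by simp
  show "\<forall>d\<in>V - {s0}. ?Fb d \<le> ?Fw d"
    using quad_form_shared_sum_mono(1)[where r=r and x=x, OF r_pos x_pos _ _ _ bt] ABC by blast
  txt \<open>The root path of b or of w separates the two shared paths.\<close>
  obtain d0 where d0: "d0 \<in> V - {s0}" "shared_path b d0 \<noteq> shared_path w d0"
  proof (cases "anc w b")
    case False
    then have "w \<noteq> s0" using anc_s0 V by blast
    then have "w \<in> shared_path w w" "w \<notin> shared_path b w"
      using False V unfolding shared_path_def by auto
    then show ?thesis using that[of w] V \<open>w \<noteq> s0\<close> by blast
  next
    case True
    then have "b \<noteq> s0" using anc_s0_eq bw by blast
    then have "b \<in> shared_path b b" "b \<notin> shared_path w b"
      using True V bw anc_antisym unfolding shared_path_def by auto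
    then show ?thesis using that[of b] V \<open>b \<noteq> s0\<close> by blast
  qed
  then show "\<exists>d\<in>V - {s0}. ?Fb d < ?Fw d"
    using quad_form_shared_sum_mono(2)[where r=r and x=x, OF r_pos x_pos _ _ _ bt] ABC by blast
qed

end

section \<open>Bypassing the missing nodes\<close>

context parent_tree
begin

lemma degree_edges:
  assumes c: "c \<in> V - {s0}"
  shows "degree edges c = Suc (card {y\<in>V - {s0}. par y = c})"
proof -
  have nbrs: "{b. b \<noteq> c \<and> {c, b} \<in> edges} = insert (par c) {y\<in>V - {s0}. par y = c}"
  proof (intro equalityI subsetI)
    fix b assume "b \<in> {b. b \<noteq> c \<and> {c, b} \<in> edges}"
    then obtain y where "y \<in> V - {s0}" "{c, b} = {y, par y}" "b \<noteq> c" unfolding edges_def by auto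
    then show "b \<in> insert (par c) {y\<in>V - {s0}. par y = c}"
      by (auto simp: doubleton_eq_iff)
  next
    fix b assume b: "b \<in> insert (par c) {y\<in>V - {s0}. par y = c}"
    then have "{c, b} \<in> edges" using c edges_par by (auto simp: insert_commute)
    moreover have "b \<noteq> c" using b c par_ne[of c] par_ne[of b] by auto
    ultimately show "b \<in> {b. b \<noteq> c \<and> {c, b} \<in> edges}" by simp
  qed
  have "par c \<notin> {y\<in>V - {s0}. par y = c}"
    using par_anc_ne c anc_par by force
  then show ?thesis unfolding degree_def nbrs using finV by simp
qed

end

locale bypass_tree = parent_tree V s0 par dep for V :: "'v set" and s0 par dep +
  fixes Miss :: "'v set"
  assumes Miss_sub: "Miss \<subseteq> V - {s0}"
    and Miss_nonadj: "\<And>a b. a \<in> Miss \<Longrightarrow> b \<in> Miss \<Longrightarrow> {a, b} \<notin> edges"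
    and Miss_deg: "\<And>c. c \<in> Miss \<Longrightarrow> degree edges c = 2"
begin

lemma Miss_child: "c \<in> Miss \<Longrightarrow> \<exists>!y. y \<in> V - {s0} \<and> par y = c"
proof -
  assume c: "c \<in> Miss"
  then have "card {y\<in>V - {s0}. par y = c} = Suc 0"
    using degree_edges Miss_deg Miss_sub by fastforce
  then obtain y0 where y0: "{y\<in>V - {s0}. par y = c} = {y0}" by (auto simp: card_1_singleton_iff)
  show ?thesis
  proof (rule ex1I[of _ y0])
    show "y0 \<in> V - {s0} \<and> par y0 = c" using y0 by blast
  qed (use y0 in blast)
qed

lemma child_unique:
  "c \<in> Miss \<Longrightarrow> y \<in> V - {s0} \<Longrightarrow> par y = c \<Longrightarrow> y' \<in> V - {s0} \<Longrightarrow> par y' = c \<Longrightarrow> y = y'"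
  using Miss_child by blast

lemma Miss_par: "c \<in> Miss \<Longrightarrow> par c \<notin> Miss \<and> par c \<in> V \<and> c \<in> V \<and> c \<noteq> s0"
  using Miss_nonadj edges_par Miss_sub par_in by blast

lemma Miss_child_observed: "c \<in> Miss \<Longrightarrow> y \<in> V - {s0} \<Longrightarrow> par y = c \<Longrightarrow> y \<notin> Miss"
  using Miss_nonadj edges_par by (metis insert_commute)

text \<open>Missing nodes are never adjacent, so skipping a missing parent reaches an observed node.\<close>
definition bpar :: "'v \<Rightarrow> 'v" where
  "bpar a = (if par a \<in> Miss then par (par a) else par a)"

definition bypass_edges :: "'v set set" where
  "bypass_edges = (\<lambda>a. {a, bpar a}) ` (V - Miss - {s0})"

lemma bpar_in: "a \<in> V - Miss - {s0} \<Longrightarrow> bpar a \<in> V - Miss"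
  unfolding bpar_def using Miss_par par_in by auto

lemma bypass_parent_tree: "parent_tree (V - Miss) s0 bpar dep"
proof
  show "dep (bpar a) < dep a" if "a \<in> V - Miss" "a \<noteq> s0" for a
    unfolding bpar_def using that Miss_par dep_lt par_in by (auto intro: less_trans)
qed (use finV s0V Miss_sub bpar_in in auto)

lemma bypass_edges_eq: "bypass_edges = parent_tree.edges (V - Miss) s0 bpar"
  unfolding bypass_edges_def parent_tree.edges_def[OF bypass_parent_tree]
  by (simp add: Diff_insert2 [symmetric] insert_commute)

lemma bypass_is_tree: "is_tree (V - Miss) bypass_edges"
  unfolding bypass_edges_eq using parent_tree.is_tree_edges[OF bypass_parent_tree] .

lemma observed_between_anc:
  assumes u: "u \<in> V - Miss" and w: "w \<in> V - Miss" and uw: "u \<noteq> w"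
    and not_edge: "{u, w} \<notin> bypass_edges" and anc: "anc u w"
  shows "\<exists>b\<in>V - Miss. between u b w \<and> b \<noteq> u \<and> b \<noteq> w"
proof -
  have w': "w \<in> V" "w \<noteq> s0" "anc u (par w)" using anc_par_ne anc uw by blast+
  have bpar_ne: "bpar w \<noteq> u"
  proof
    assume "bpar w = u"
    then have "{u, w} = {w, bpar w}" by auto
    then show False using not_edge w w' unfolding bypass_edges_def by blast
  qed
  show ?thesis
  proof (cases "par w \<in> Miss")
    case False
    then have "between u (par w) w"
      unfolding between_def using anc_par[OF w'(1,2)] w'(3) anc_trans by blast
    then show ?thesis using False bpar_ne par_in par_ne w' unfolding bpar_def by auto
  next
    case True
    let ?c = "par w"
    have c: "par ?c \<notin> Miss" "?c \<in> V" "?c \<noteq> s0" using Miss_par True by auto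
    have "u \<noteq> ?c" using u True by blast
    then have "anc u (par ?c)" using w'(3) anc_par_ne by blast
    then have "between u (par ?c) w"
      unfolding between_def using anc_par[OF c(2,3)] anc_par[OF w'(1,2)] anc_trans by blast
    moreover have "par ?c \<noteq> w"
      using anc_par[OF c(2,3)] anc_par[OF w'(1,2)] anc_antisym True w by force
    ultimately show ?thesis using True bpar_ne c par_in unfolding bpar_def by auto
  qed
qed

lemma observed_between_incomparable:
  assumes u: "u \<in> V - Miss" and w: "w \<in> V - Miss" and nuw: "\<not> anc u w" and nwu: "\<not> anc w u"
  shows "\<exists>b\<in>V - Miss. between u b w \<and> b \<noteq> u \<and> b \<noteq> w"
proof -
  have uV: "u \<in> V" and wV: "w \<in> V" using u w by auto
  have bp: "u \<in> V - {s0}" "between u (par u) w" using between_par[OF anc_refl nuw wV uV] by auto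
  have pu: "par u \<noteq> w" "par u \<noteq> u" using anc_par nwu par_ne bp by auto
  show ?thesis
  proof (cases "par u \<in> Miss")
    case False
    then show ?thesis using bp pu par_in by auto
  next
    case True
    let ?c = "par u"
    have c: "par ?c \<notin> Miss" "par ?c \<in> V" "?c \<in> V" "?c \<noteq> s0" using Miss_par[OF True] by auto
    have cu: "anc ?c u" using anc_par bp by blast
    show ?thesis
    proof (cases "anc ?c w")
      case False
      have "between u (par ?c) w" using between_par[OF cu False wV uV] by blast
      moreover have "par ?c \<noteq> u" using anc_par[OF c(3,4)] anc_antisym[OF cu] pu by auto
      moreover have "par ?c \<noteq> w" using anc_par[OF c(3,4)] cu anc_trans nwu by blast
      ultimately show ?thesis using c by blast
    next
      case True
      txt \<open>The unique child of the missing node ?c would be an ancestor of w.\<close>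
      have "w \<noteq> ?c" using w \<open>?c \<in> Miss\<close> by auto
      then obtain y where y: "y \<in> V" "y \<noteq> s0" "par y = ?c" "anc y w"
        using anc_child[OF True] by blast
      have "y = u" using child_unique[OF \<open>?c \<in> Miss\<close>, of y u] y bp by simp
      then show ?thesis using y nuw by simp
    qed
  qed
qed

lemma observed_between_exists:
  assumes u: "u \<in> V - Miss" and w: "w \<in> V - Miss" and uw: "u \<noteq> w"
    and not_edge: "{u, w} \<notin> bypass_edges"
  shows "\<exists>b\<in>V - Miss. between u b w \<and> b \<noteq> u \<and> b \<noteq> w"
proof (cases "anc u w")
  case True
  then show ?thesis using observed_between_anc[OF u w uw not_edge] by blast
next
  case nuw: False
  show ?thesis
  proof (cases "anc w u")
    case True
    then obtain b where "b \<in> V - Miss" "between w b u" "b \<noteq> w" "b \<noteq> u"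
      using observed_between_anc[OF w u uw[symmetric]] not_edge by (metis insert_commute)
    then show ?thesis using between_sym by blast
  qed (use observed_between_incomparable[OF u w nuw] in blast)
qed

text \<open>An observed pair that is not a bypass edge is split by an observed node between them;
  induction on the number of nodes between them yields a lighter bypass edge across the cut.\<close>
lemma bypass_cut_lighter:
  fixes f :: "'v \<Rightarrow> 'v \<Rightarrow> real"
  assumes f_sym: "\<And>a b. f a b = f b a"
    and f_mono: "\<And>u b w. u \<in> V \<Longrightarrow> b \<in> V \<Longrightarrow> w \<in> V \<Longrightarrow> between u b w \<Longrightarrow> b \<noteq> w
                   \<Longrightarrow> f u b < f u w"
  shows "u \<in> V - Miss \<Longrightarrow> w \<in> V - Miss \<Longrightarrow> u \<noteq> w \<Longrightarrow> u \<in> X \<Longrightarrow> w \<notin> X \<Longrightarrow>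
    \<exists>y z. {y, z} \<in> bypass_edges \<and> y \<in> X \<and> z \<notin> X \<and> f y z \<le> f u w
      \<and> ({u, w} \<notin> bypass_edges \<longrightarrow> f y z < f u w)"
proof (induction "card {c\<in>V. between u c w}" arbitrary: u w rule: less_induct)
  case less
  show ?case
  proof (cases "{u, w} \<in> bypass_edges")
    case False
    then obtain b where b: "b \<in> V - Miss" "between u b w" "b \<noteq> u" "b \<noteq> w"
      using observed_between_exists less.prems by blast
    have uV: "u \<in> V" and wV: "w \<in> V" using less.prems by auto
    show ?thesis
    proof (cases "b \<in> X")
      case True
      have "card {c\<in>V. between b c w} < card {c\<in>V. between u c w}"
        using card_between_less(1) b uV wV by blast
      then obtain y z where yz: "{y, z} \<in> bypass_edges" "y \<in> X" "z \<notin> X" "f y z \<le> f b w"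
        using less.hyps b(1,4) True less.prems by blast
      have "f w b < f w u" using f_mono[of w b u] b uV wV between_sym by blast
      then show ?thesis using yz f_sym[of w b] f_sym[of w u] by force
    next
      case False
      have "card {c\<in>V. between u c b} < card {c\<in>V. between u c w}"
        using card_between_less(2) b uV wV by blast
      then obtain y z where yz: "{y, z} \<in> bypass_edges" "y \<in> X" "z \<notin> X" "f y z \<le> f u b"
        using less.hyps b(1,3) False less.prems by blast
      have "f u b < f u w" using f_mono[of u b w] b uV wV by blast
      then show ?thesis using yz by force
    qed
  qed (use less.prems in blast)
qed

definition missing_children :: "'v set" where
  "missing_children = {y\<in>V - {s0}. par y \<in> Miss}"

lemma card_missing_children: "card missing_children = card Miss"
proof -
  have "bij_betw par missing_children Miss"
  proof (rule bij_betw_imageI)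
    show "inj_on par missing_children" unfolding missing_children_def
      by (rule inj_onI) (use child_unique in blast)
    show "par ` missing_children = Miss"
      unfolding missing_children_def using Miss_child by blast
  qed
  then show ?thesis by (rule bij_betw_same_card)
qed

lemma missing_children_observed: "y \<in> missing_children \<Longrightarrow> y \<in> V - Miss - {s0}"
  unfolding missing_children_def using Miss_child_observed[of "par y" y] by auto

lemma dep_par_par_less: "y \<in> missing_children \<Longrightarrow> dep (par (par y)) < dep y"
proof -
  assume "y \<in> missing_children"
  then have "y \<in> V - {s0}" "par y \<in> V - {s0}" using Miss_sub unfolding missing_children_def by auto
  then have "dep (par y) < dep y" "dep (par (par y)) < dep (par y)" using dep_lt by blast+
  then show ?thesis by linarith
qed

lemma grandparent_edge_notin_edges:
  assumes y: "y \<in> missing_children"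
  shows "{y, par (par y)} \<notin> edges"
proof
  assume "{y, par (par y)} \<in> edges"
  then obtain x where x: "x \<in> V - {s0}" "{y, par (par y)} = {x, par x}" unfolding edges_def by blast
  then consider "x = y" "par x = par (par y)" | "x = par (par y)" "par x = y"
    by (auto simp: doubleton_eq_iff)
  then show False
  proof cases
    case 1
    then show False using par_ne[of "par y"] y Miss_sub unfolding missing_children_def by auto
  next
    case 2
    then have "dep y < dep (par (par y))" using dep_lt[of x] x by auto
    then show False using dep_par_par_less[OF y] by simp
  qed
qed

text \<open>The k new edges join each child of a missing node to its grandparent.\<close>
lemma card_bypass_edges_diff: "card (bypass_edges - edges) = card Miss"
proof -
  have eq: "bypass_edges - edges = (\<lambda>y. {y, par (par y)}) ` missing_children"
  proof (intro equalityI subsetI)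
    fix e assume e: "e \<in> bypass_edges - edges"
    then obtain a where a: "a \<in> V - Miss - {s0}" "e = {a, bpar a}" unfolding bypass_edges_def by blast
    then have "par a \<in> Miss" using e edges_par unfolding bpar_def by (cases "par a \<in> Miss") auto
    then show "e \<in> (\<lambda>y. {y, par (par y)}) ` missing_children"
      using a unfolding missing_children_def bpar_def by auto
  next
    fix e assume "e \<in> (\<lambda>y. {y, par (par y)}) ` missing_children"
    then obtain y where y: "y \<in> missing_children" "e = {y, par (par y)}" by blast
    then have "e \<in> bypass_edges"
      using missing_children_observed unfolding missing_children_def bypass_edges_def bpar_def by auto
    then show "e \<in> bypass_edges - edges" using grandparent_edge_notin_edges y by blast
  qed
  have "inj_on (\<lambda>y. {y, par (par y)}) missing_children"
  proof (rule inj_onI)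
    fix y1 y2 assume y1: "y1 \<in> missing_children" and y2: "y2 \<in> missing_children"
      and e: "{y1, par (par y1)} = {y2, par (par y2)}"
    show "y1 = y2"
    proof (rule ccontr)
      assume "y1 \<noteq> y2"
      then have "y1 = par (par y2)" "y2 = par (par y1)" using e by (auto simp: doubleton_eq_iff)
      then show False using dep_par_par_less[OF y1] dep_par_par_less[OF y2] by simp
    qed
  qed
  then show ?thesis unfolding eq using card_image card_missing_children by metis
qed

text \<open>The 2k removed edges are the two edges at each missing node.\<close>
lemma card_edges_diff_bypass: "card (edges - bypass_edges) = 2 * card Miss"
proof -
  have eq: "edges - bypass_edges = (\<lambda>a. {a, par a}) ` (Miss \<union> missing_children)"
  proof (intro equalityI subsetI)
    fix e assume e: "e \<in> edges - bypass_edges"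
    then obtain a where a: "a \<in> V - {s0}" "e = {a, par a}" unfolding edges_def by blast
    have "a \<in> Miss \<or> par a \<in> Miss"
    proof (rule ccontr)
      assume "\<not> (a \<in> Miss \<or> par a \<in> Miss)"
      then have "e = {a, bpar a}" "a \<in> V - Miss - {s0}" using a unfolding bpar_def by auto
      then show False using e unfolding bypass_edges_def by blast
    qed
    then show "e \<in> (\<lambda>a. {a, par a}) ` (Miss \<union> missing_children)"
      using a unfolding missing_children_def by blast
  next
    fix e assume "e \<in> (\<lambda>a. {a, par a}) ` (Miss \<union> missing_children)"
    then obtain a where a: "a \<in> Miss \<union> missing_children" "e = {a, par a}" by blast
    then have "a \<in> V - {s0}" "a \<in> Miss \<or> par a \<in> Miss"
      using Miss_sub unfolding missing_children_def by auto
    moreover have "e \<notin> bypass_edges"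
    proof
      assume "e \<in> bypass_edges"
      then obtain b where b: "b \<in> V - Miss - {s0}" "e = {b, bpar b}" unfolding bypass_edges_def by blast
      then have "e \<inter> Miss = {}" using bpar_in by auto
      then show False using a \<open>a \<in> Miss \<or> par a \<in> Miss\<close> by auto
    qed
    ultimately show "e \<in> edges - bypass_edges" using a edges_par by blast
  qed
  have sub: "Miss \<union> missing_children \<subseteq> V - {s0}" using Miss_sub unfolding missing_children_def by blast
  have disj: "Miss \<inter> missing_children = {}" using Miss_par unfolding missing_children_def by blast
  have fin: "finite Miss" "finite missing_children"
    using finV Miss_sub finite_subset unfolding missing_children_def by auto
  show ?thesis unfolding eq card_image[OF inj_on_subset[OF edge_inj sub]]
    using card_Un_disjoint[OF fin disj] card_missing_children by simp
qed

end

context parent_tree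
begin

lemma lcpf_v_edges_eq:
  assumes r_pos: "\<And>c. c \<in> V - {s0} \<Longrightarrow> r {c, par c} > 0"
    and x_pos: "\<And>c. c \<in> V - {s0} \<Longrightarrow> x {c, par c} > 0"
  shows "lcpf_v V edges s0 r x v0 p q a = (\<lambda>\<omega>. (if a = s0 then v0 else 0)
           + (\<Sum>d\<in>V - {s0}. shared_sum r a d * p d \<omega> + shared_sum x a d * q d \<omega>))"
proof
  fix \<omega>
  have "red_inv (V - {s0}) (laplacian edges (\<lambda>e. 1 / r e)) = shared_sum r"
    and "red_inv (V - {s0}) (laplacian edges (\<lambda>e. 1 / x e)) = shared_sum x"
    by (rule red_inv_laplacian_edges, fact r_pos x_pos)+
  then show "lcpf_v V edges s0 r x v0 p q a \<omega> = (if a = s0 then v0 else 0)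
           + (\<Sum>d\<in>V - {s0}. shared_sum r a d * p d \<omega> + shared_sum x a d * q d \<omega>)"
    using shared_sum_eq_0[of s0] unfolding lcpf_v_def by simp
qed

lemma phi_lcpf_between_less:
  assumes r_pos: "\<forall>e\<in>edges. r e > 0" and x_pos: "\<forall>e\<in>edges. x e > 0"
    and prob: "prob_space M"
    and p_meas: "\<forall>a\<in>V - {s0}. p a \<in> borel_measurable M"
    and q_meas: "\<forall>a\<in>V - {s0}. q a \<in> borel_measurable M"
    and p_L2: "\<forall>a\<in>V - {s0}. integrable M (\<lambda>\<omega>. (p a \<omega>)\<^sup>2)"
    and q_L2: "\<forall>a\<in>V - {s0}. integrable M (\<lambda>\<omega>. (q a \<omega>)\<^sup>2)"
    and cov_p: "\<forall>a\<in>V - {s0}. \<forall>b\<in>V - {s0}. a \<noteq> b \<longrightarrow> cov M (p a) (p b) = 0"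
    and cov_q: "\<forall>a\<in>V - {s0}. \<forall>b\<in>V - {s0}. a \<noteq> b \<longrightarrow> cov M (q a) (q b) = 0"
    and cov_qp: "\<forall>a\<in>V - {s0}. \<forall>b\<in>V - {s0}. a \<noteq> b \<longrightarrow> cov M (q a) (p b) = 0"
    and cov_qp_diag: "\<forall>a\<in>V - {s0}. cov M (q a) (p a) \<ge> 0"
    and var_pos: "\<forall>c\<in>V - {s0}. cov M (p c) (p c) + cov M (q c) (q c) > 0"
    and uV: "u \<in> V" and bV: "b \<in> V" and wV: "w \<in> V" and bt: "between u b w" and bw: "b \<noteq> w"
  shows "phi M (lcpf_v V edges s0 r x v0 p q) u b < phi M (lcpf_v V edges s0 r x v0 p q) u w"
proof -
  have r_pos': "\<And>c. c \<in> V - {s0} \<Longrightarrow> r {c, par c} > 0"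
    and x_pos': "\<And>c. c \<in> V - {s0} \<Longrightarrow> x {c, par c} > 0"
    using r_pos x_pos edges_par by blast+
  let ?v = "lcpf_v V edges s0 r x v0 p q"
  have v_eq: "?v a = (\<lambda>\<omega>. (if a = s0 then v0 else 0)
           + (\<Sum>d\<in>V - {s0}. shared_sum r a d * p d \<omega> + shared_sum x a d * q d \<omega>))" for a
    by (rule lcpf_v_edges_eq) (fact r_pos' x_pos')+
  have phi_eq: "phi M ?v a c = (\<Sum>d\<in>V - {s0}. quad_form (cov M (p d) (p d)) (cov M (q d) (q d))
      (cov M (q d) (p d)) (shared_sum r a d - shared_sum r c d) (shared_sum x a d - shared_sum x c d))" for a c
    by (rule phi_affine_eq[where v = ?v and u = a and w = c and R = "shared_sum r" and X = "shared_sum x",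
          OF prob _ _ _ cov_p cov_q cov_qp v_eq v_eq])
       (use finV p_meas p_L2 q_meas q_L2 in \<open>auto simp: sq_integrable_def\<close>)
  have cov_nonneg: "0 \<le> cov M f f" for f
    unfolding cov_def by (rule Bochner_Integration.integral_nonneg) simp
  show ?thesis
    unfolding phi_eq
  proof (rule sum_quad_form_between_less)
    show "0 \<le> cov M (p d) (p d) \<and> 0 \<le> cov M (q d) (q d) \<and> 0 \<le> cov M (q d) (p d)
        \<and> 0 < cov M (p d) (p d) + cov M (q d) (q d)" if "d \<in> V - {s0}" for d
      using cov_nonneg cov_qp_diag var_pos that by blast
  qed (fact r_pos' x_pos' bt bw bV wV)+
qed

end

theorem corollary1:
  fixes V :: "'v set" and E :: "'v set set" and s0 :: 'v
    and r x :: "'v set \<Rightarrow> real" and v0 :: real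
    and M :: "'w measure" and p q :: "'v \<Rightarrow> 'w \<Rightarrow> real"
    and Miss :: "'v set" and k :: nat and TM :: "'v set set"
  assumes tree: "is_tree V E"
    and s0: "s0 \<in> V" "degree E s0 = 1"
    and r_pos: "\<forall>e\<in>E. r e > 0" and x_pos: "\<forall>e\<in>E. x e > 0"
    and prob: "prob_space M"
    and p_meas: "\<forall>a\<in>V - {s0}. p a \<in> borel_measurable M"
    and q_meas: "\<forall>a\<in>V - {s0}. q a \<in> borel_measurable M"
    and p_L2: "\<forall>a\<in>V - {s0}. integrable M (\<lambda>\<omega>. (p a \<omega>)\<^sup>2)"
    and q_L2: "\<forall>a\<in>V - {s0}. integrable M (\<lambda>\<omega>. (q a \<omega>)\<^sup>2)"
    and cov_p: "\<forall>a\<in>V - {s0}. \<forall>b\<in>V - {s0}. a \<noteq> b \<longrightarrow> cov M (p a) (p b) = 0"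
    and cov_q: "\<forall>a\<in>V - {s0}. \<forall>b\<in>V - {s0}. a \<noteq> b \<longrightarrow> cov M (q a) (q b) = 0"
    and cov_qp: "\<forall>a\<in>V - {s0}. \<forall>b\<in>V - {s0}. a \<noteq> b \<longrightarrow> cov M (q a) (p b) = 0"
    and cov_qp_diag: "\<forall>a\<in>V - {s0}. cov M (q a) (p a) \<ge> 0"
    and var_pos: "\<forall>c\<in>V - {s0}. cov M (p c) (p c) + cov M (q c) (q c) > 0"
    and Miss_sub: "Miss \<subseteq> V - {s0}" and Miss_card: "card Miss = k"
    and Miss_nonadj: "\<forall>a\<in>Miss. \<forall>b\<in>Miss. {a, b} \<notin> E"
    and Miss_deg: "\<forall>c\<in>Miss. degree E c = 2"
    and MST: "is_MST (V - Miss) (phi M (lcpf_v V E s0 r x v0 p q)) TM"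
  shows "is_tree (V - Miss) TM \<and> card (V - Miss) = card V - k
         \<and> card (TM - E) = k \<and> card (E - TM) = 2 * k"
proof -
  obtain par dep where rooted: "parent_tree V s0 par dep" and E: "E = parent_tree.edges V s0 par"
    using is_tree_parent_tree[OF tree s0(1)] .
  interpret bypass_tree V s0 par dep Miss
    using rooted Miss_sub Miss_nonadj Miss_deg unfolding E
    by (intro bypass_tree.intro bypass_tree_axioms.intro) auto
  let ?phi = "phi M (lcpf_v V E s0 r x v0 p q)"
  have phi_less: "?phi u b < ?phi u w"
    if "u \<in> V" "b \<in> V" "w \<in> V" "between u b w" "b \<noteq> w" for u b w
    using phi_lcpf_between_less[OF r_pos[unfolded E] x_pos[unfolded E] prob
        p_meas q_meas p_L2 q_L2 cov_p cov_q cov_qp cov_qp_diag var_pos that] unfolding E .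
  have "TM = bypass_edges"
  proof (rule MST_eq_of_cut_property[OF bypass_is_tree MST phi_sym])
    show "\<exists>y z. {y, z} \<in> bypass_edges \<and> y \<in> X \<and> z \<notin> X \<and> ?phi y z < ?phi u w"
      if "u \<in> V - Miss" "w \<in> V - Miss" "u \<noteq> w" "{u, w} \<notin> bypass_edges" "u \<in> X" "w \<notin> X" for u w X
      using bypass_cut_lighter[where f = ?phi, OF phi_sym phi_less that(1,2,3,5,6)] that(4) by blast
  qed
  moreover have "card (V - Miss) = card V - k"
    using card_Diff_subset[OF finite_subset[OF Miss_sub]] finV Miss_sub Miss_card by auto
  ultimately show ?thesis
    using bypass_is_tree card_bypass_edges_diff card_edges_diff_bypass Miss_card unfolding E by simp
qed

end
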